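(* Let $\mathcal{N}$ be a classical channel from $X$ to $Y$ and $\mathcal{M}$ a classical channel from $X'$ to $Y$, both given in standard form. Then $\mathcal{N}\sim\mathcal{M}$ if and only if $\mathcal{N}=\mathcal{M}$, i.e. their transition matrices are identical (in particular $|X|=|X'|$).
   Context: A classical channel $\mathcal{N}$ from $X$ ($|X|=m$) to $Y$ ($|Y|=n$) has an $n\times m$ column-stochastic transition matrix $N=[\mathbf{p}_1\cdots\mathbf{p}_m]$. For $\mathbf{p}\in\mathrm{Prob}(n)$, $\|\mathbf{p}\|_{(k)}$ denotes the sum of its $k$ largest entries, and $\mathbf{p}\succ\mathbf{q}$ (vector majorization) means $\|\mathbf{p}\|_{(k)}\ge\|\mathbf{q}\|_{(k)}$ for all $k$. $\mathcal{N}$ is in standard form if: (1) the entries of each column are in non-increasing order; (2) the columns are in decreasing lexicographic order: for every $x\in[m-1]$ there is $\ell\in[n]$ with $\|\mathbf{p}_x\|_{(k)}=\|\mathbf{p}_{x+1}\|_{(k)}$ for all $k<\ell$ and $\|\mathbf{p}_x\|_{(\ell)}>\|\mathbf{p}_{x+1}\|_{(\ell)}$; (3) no column is majorized by a convex combination of the other columns. Classical channel majorization: $\mathcal{N}\succ\mathcal{M}$ if $\mathcal{M}=\Theta[\mathcal{N}]$ for a random permutation superchannel, i.e. $\Theta[\mathcal{N}]=\mathcal{D}^{YZ\to Y}\circ(\mathcal{N}\otimes\mathrm{id}^Z)\circ\mathcal{S}^{X'\to XZ}$ with $Z$ a finite classical system, $\mathcal{S},\mathcal{D}$ classical channels and $\mathcal{D}(\cdot\otimes\mathbf{e}_z)$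 doubly stochastic for every $z$. $\mathcal{N}\sim\mathcal{M}$ means $\mathcal{N}\succ\mathcal{M}$ and $\mathcal{M}\succ\mathcal{N}$. *)

theory Defs
  imports Complex_Main
begin

text \<open>A classical channel from X (|X| = m) to Y (|Y| = n) is represented by its
  transition matrix N :: nat => nat => real, entry N y x (y < n, x < m) being the
  probability of output y given input x. Values outside the index range are irrelevant.\<close>

definition stochastic :: "nat \<Rightarrow> nat \<Rightarrow> (nat \<Rightarrow> nat \<Rightarrow> real) \<Rightarrow> bool" where
  "stochastic n m N \<longleftrightarrow>
     (\<forall>y<n. \<forall>x<m. 0 \<le> N y x) \<and> (\<forall>x<m. (\<Sum>y<n. N y x) = 1)"

definition col :: "(nat \<Rightarrow> nat \<Rightarrow> real) \<Rightarrow> nat \<Rightarrow> (nat \<Rightarrow> real)" where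
  "col N x = (\<lambda>y. N y x)"

definition kyfan :: "nat \<Rightarrow> (nat \<Rightarrow> real) \<Rightarrow> nat \<Rightarrow> real" where
  "kyfan n p k = Max ((\<lambda>S. \<Sum>i\<in>S. p i) ` {S. S \<subseteq> {..<n} \<and> card S = k})"

definition majorizes :: "nat \<Rightarrow> (nat \<Rightarrow> real) \<Rightarrow> (nat \<Rightarrow> real) \<Rightarrow> bool" where
  "majorizes n p q \<longleftrightarrow> (\<forall>k\<in>{1..n}. kyfan n q k \<le> kyfan n p k)"

definition standard_form :: "nat \<Rightarrow> nat \<Rightarrow> (nat \<Rightarrow> nat \<Rightarrow> real) \<Rightarrow> bool" where
  "standard_form n m N \<longleftrightarrow>
     stochastic n m N \<and>
     \<comment> \<open>(1) entries of each column non-increasing\<close>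
     (\<forall>x<m. \<forall>i j. i \<le> j \<and> j < n \<longrightarrow> N j x \<le> N i x) \<and>
     \<comment> \<open>(2) columns in decreasing lexicographic order of Ky Fan norms\<close>
     (\<forall>x. x + 1 < m \<longrightarrow>
        (\<exists>l\<in>{1..n}. (\<forall>k\<in>{1..<l}. kyfan n (col N x) k = kyfan n (col N (x+1)) k) \<and>
                     kyfan n (col N x) l > kyfan n (col N (x+1)) l)) \<and>
     \<comment> \<open>(3) no column majorized by a convex combination of the other columns\<close>
     (\<forall>x<m. \<not> (\<exists>t::nat \<Rightarrow> real.
        (\<forall>x'<m. 0 \<le> t x') \<and> t x = 0 \<and> (\<Sum>x'<m. t x') = 1 \<and>
        majorizes n (\<lambda>y. \<Sum>x'<m. t x' * N y x') (col N x)))"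

text \<open>Channel majorization N \<succ> M (N : X \<rightarrow> Y with |X| = m, M : X' \<rightarrow> Y with |X'| = m', |Y| = n):
  M = D \<circ> (N \<otimes> id_Z) \<circ> S for a finite classical system Z (|Z| = l), a classical channel
  S : X' \<rightarrow> XZ (entries S x z x') and a classical channel D : YZ \<rightarrow> Y (entries D y' y z)
  with D(\<cdot> \<otimes> e_z) doubly stochastic for every z.\<close>
definition channel_majorizes ::
  "nat \<Rightarrow> nat \<Rightarrow> (nat \<Rightarrow> nat \<Rightarrow> real) \<Rightarrow> nat \<Rightarrow> (nat \<Rightarrow> nat \<Rightarrow> real) \<Rightarrow> bool" where
  "channel_majorizes n m N m' M \<longleftrightarrow>
     (\<exists>(l::nat) (S::nat \<Rightarrow> nat \<Rightarrow> nat \<Rightarrow> real) (D::nat \<Rightarrow> nat \<Rightarrow> nat \<Rightarrow> real).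
        (\<forall>x<m. \<forall>z<l. \<forall>x'<m'. 0 \<le> S x z x') \<and>
        (\<forall>x'<m'. (\<Sum>x<m. \<Sum>z<l. S x z x') = 1) \<and>
        (\<forall>z<l. \<forall>y'<n. \<forall>y<n. 0 \<le> D y' y z) \<and>
        (\<forall>z<l. \<forall>y<n. (\<Sum>y'<n. D y' y z) = 1) \<and>
        (\<forall>z<l. \<forall>y'<n. (\<Sum>y<n. D y' y z) = 1) \<and>
        (\<forall>y<n. \<forall>x'<m'. M y x' = (\<Sum>z<l. \<Sum>x<m. \<Sum>y0<n. D y y0 z * N y0 x * S x z x')))"

definition channel_equiv ::
  "nat \<Rightarrow> nat \<Rightarrow> (nat \<Rightarrow> nat \<Rightarrow> real) \<Rightarrow> nat \<Rightarrow> (nat \<Rightarrow> nat \<Rightarrow> real) \<Rightarrow> bool" where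
  "channel_equiv n m N m' M \<longleftrightarrow> channel_majorizes n m N m' M \<and> channel_majorizes n m' M m N"

end

theory Submission
  imports Defs
begin

text \<open>For a column sorted non-increasingly, the Ky Fan norms are its partial sums, and a doubly
  stochastic post-processing can only decrease partial sums. Hence if N majorizes M, the
  partial-sum profile of every column of M is dominated by a convex combination of the profiles of
  the columns of N. For mutually majorizing channels in standard form, composing the two
  dominations and invoking condition (3) forces every column profile of N to equal one of M and vice
  versa. Condition (2) lists these profiles in strictly decreasing lexicographic order, and a
  strictly decreasing enumeration of a finite set is unique.\<close>

definition cumsum :: "(nat \<Rightarrow> real) \<Rightarrow> nat \<Rightarrow> real" where
  "cumsum p k = (\<Sum>i<k. p i)"

lemma cumsum_sum: "cumsum (\<lambda>i. \<Sum>j\<in>J. f j i) k = (\<Sum>j\<in>J. cumsum (f j) k)"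
  unfolding cumsum_def by (rule sum.swap)

lemma cumsum_scale: "cumsum (\<lambda>i. a * p i) k = a * cumsum p k"
  unfolding cumsum_def by (simp add: sum_distrib_left)

lemma weighted_sum_le_cumsum:
  fixes p w :: "nat \<Rightarrow> real"
  assumes p: "antimono_on {..<n} p" and "k \<le> n"
    and w: "\<And>y. y < n \<Longrightarrow> 0 \<le> w y \<and> w y \<le> 1" and w_sum: "(\<Sum>y<n. w y) = k"
  shows "(\<Sum>y<n. w y * p y) \<le> cumsum p k"
proof -
  define v where "v = p (k - 1)"
  define ind :: "nat \<Rightarrow> real" where "ind y = of_bool (y < k)" for y
  have first_k: "{..<n} \<inter> {y. y < k} = {..<k}"
    using \<open>k \<le> n\<close> by auto
  have cumsum_ind: "cumsum p k = (\<Sum>y<n. ind y * p y)"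
    by (simp add: cumsum_def ind_def sum.If_cases first_k)
  have ind_sum: "(\<Sum>y<n. ind y) = k"
    by (simp add: ind_def sum.If_cases first_k)
  \<comment> \<open>Each (w y - ind y) * (p y - v) is nonpositive, and the w y - ind y sum to 0.\<close>
  have "(w y - ind y) * p y \<le> (w y - ind y) * v" if "y < n" for y
  proof (cases "y < k")
    case True
    then have "v \<le> p y" using p \<open>k \<le> n\<close> by (auto simp: v_def monotone_on_def)
    moreover have "w y - ind y \<le> 0" using True w that by (simp add: ind_def)
    ultimately show ?thesis by (rule mult_left_mono_neg)
  next
    case False
    then have "p y \<le> v" using p that by (auto simp: v_def monotone_on_def)
    moreover have "0 \<le> w y - ind y" using False w that by (simp add: ind_def)
    ultimately show ?thesis by (rule mult_left_mono)
  qed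
  then have "(\<Sum>y<n. (w y - ind y) * p y) \<le> (\<Sum>y<n. (w y - ind y) * v)"
    by (intro sum_mono) simp
  also have "\<dots> = 0"
    using w_sum ind_sum by (simp add: sum_subtractf sum_distrib_right[symmetric])
  finally show ?thesis
    by (simp add: cumsum_ind left_diff_distrib sum_subtractf)
qed

lemma kyfan_eq_cumsum:
  fixes p :: "nat \<Rightarrow> real"
  assumes p: "antimono_on {..<n} p" and "k \<le> n"
  shows "kyfan n p k = cumsum p k"
  unfolding kyfan_def
proof (rule Max_eqI)
  show "finite ((\<lambda>S. sum p S) ` {S. S \<subseteq> {..<n} \<and> card S = k})"
    by (rule finite_imageI) (rule finite_subset[of _ "Pow {..<n}"], auto)
  show "cumsum p k \<in> (\<lambda>S. sum p S) ` {S. S \<subseteq> {..<n} \<and> card S = k}"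
    using \<open>k \<le> n\<close> by (intro rev_image_eqI[of "{..<k}"]) (auto simp: cumsum_def)
next
  fix s assume "s \<in> (\<lambda>S. sum p S) ` {S. S \<subseteq> {..<n} \<and> card S = k}"
  then obtain S where S: "S \<subseteq> {..<n}" "card S = k" and s: "s = sum p S" by auto
  have "sum p S = (\<Sum>y<n. of_bool (y \<in> S) * p y)"
    using S by (simp add: sum.If_cases Int_absorb1)
  also have "\<dots> \<le> cumsum p k"
    using S finite_subset[OF S(1)]
    by (intro weighted_sum_le_cumsum[OF p \<open>k \<le> n\<close>]) (auto simp: sum.If_cases Int_absorb1)
  finally show "s \<le> cumsum p k" using s by simp
qed

definition doubly_stochastic :: "nat \<Rightarrow> (nat \<Rightarrow> nat \<Rightarrow> real) \<Rightarrow> bool" where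
  "doubly_stochastic n D \<longleftrightarrow>
     (\<forall>i<n. \<forall>j<n. 0 \<le> D i j) \<and> (\<forall>j<n. (\<Sum>i<n. D i j) = 1) \<and> (\<forall>i<n. (\<Sum>j<n. D i j) = 1)"

lemma cumsum_doubly_stochastic_le:
  fixes p :: "nat \<Rightarrow> real"
  assumes D: "doubly_stochastic n D" and p: "antimono_on {..<n} p" and "k \<le> n"
  shows "cumsum (\<lambda>i. \<Sum>j<n. D i j * p j) k \<le> cumsum p k"
proof -
  have "cumsum (\<lambda>i. \<Sum>j<n. D i j * p j) k = (\<Sum>j<n. (\<Sum>i<k. D i j) * p j)"
    unfolding cumsum_def by (simp add: sum_distrib_right) (rule sum.swap)
  also have "\<dots> \<le> cumsum p k"
  proof (rule weighted_sum_le_cumsum[OF p \<open>k \<le> n\<close>])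
    fix j assume "j < n"
    have "(\<Sum>i<k. D i j) \<le> (\<Sum>i<n. D i j)"
      using D \<open>j < n\<close> \<open>k \<le> n\<close> by (intro sum_mono2) (auto simp: doubly_stochastic_def)
    then show "0 \<le> (\<Sum>i<k. D i j) \<and> (\<Sum>i<k. D i j) \<le> 1"
      using D \<open>j < n\<close> \<open>k \<le> n\<close> by (auto simp: doubly_stochastic_def intro: sum_nonneg)
  next
    have "(\<Sum>j<n. \<Sum>i<k. D i j) = (\<Sum>i<k. \<Sum>j<n. D i j)" by (rule sum.swap)
    also have "\<dots> = (\<Sum>i<k. 1)"
      using D \<open>k \<le> n\<close> by (intro sum.cong) (auto simp: doubly_stochastic_def)
    finally show "(\<Sum>j<n. \<Sum>i<k. D i j) = k" by simp
  qed
  finally show ?thesis .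
qed

definition convex_weights :: "'a set \<Rightarrow> ('a \<Rightarrow> real) \<Rightarrow> bool" where
  "convex_weights A t \<longleftrightarrow> (\<forall>x\<in>A. 0 \<le> t x) \<and> sum t A = 1"

definition convex_dominated :: "'k set \<Rightarrow> ('a \<Rightarrow> 'k \<Rightarrow> real) \<Rightarrow> 'a set \<Rightarrow> ('k \<Rightarrow> real) \<Rightarrow> bool" where
  "convex_dominated K c A v \<longleftrightarrow> (\<exists>t. convex_weights A t \<and> (\<forall>k\<in>K. v k \<le> (\<Sum>x\<in>A. t x * c x k)))"

lemma convex_weights_le_1:
  assumes "finite A" "convex_weights A t" "x \<in> A"
  shows "t x \<le> 1"
  using assms member_le_sum[of x A t] by (auto simp: convex_weights_def)

lemma convex_weights_nonzero:
  assumes "convex_weights A t"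
  obtains x where "x \<in> A" "0 < t x"
proof -
  have "\<not> (\<forall>x\<in>A. t x = 0)"
  proof
    assume "\<forall>x\<in>A. t x = 0"
    then have "sum t A = 0" by (rule sum.neutral)
    with assms show False by (simp add: convex_weights_def)
  qed
  then obtain x where "x \<in> A" "t x \<noteq> 0" by blast
  moreover have "0 \<le> t x" using assms \<open>x \<in> A\<close> by (simp add: convex_weights_def)
  ultimately show ?thesis using that by simp
qed

lemma convex_weights_compose:
  assumes "finite A" "convex_weights B s" "\<And>y. y \<in> B \<Longrightarrow> convex_weights A (T y)"
  shows "convex_weights A (\<lambda>x. \<Sum>y\<in>B. s y * T y x)"
proof -
  have "(\<Sum>x\<in>A. \<Sum>y\<in>B. s y * T y x) = (\<Sum>y\<in>B. s y * sum (T y) A)"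
    by (subst sum.swap) (simp add: sum_distrib_left)
  then show ?thesis
    using assms by (auto simp: convex_weights_def intro!: sum_nonneg mult_nonneg_nonneg)
qed

lemma convex_combination_squeeze:
  fixes a :: "'a \<Rightarrow> real"
  assumes "finite B" and s: "convex_weights B s" and v: "v \<le> (\<Sum>y\<in>B. s y * a y)"
    and a: "\<And>y. y \<in> B \<Longrightarrow> 0 < s y \<Longrightarrow> a y \<le> v" and "y \<in> B" "0 < s y"
  shows "a y = v"
proof -
  have nonneg: "\<forall>y\<in>B. 0 \<le> s y * (v - a y)"
  proof
    fix y assume "y \<in> B"
    then have "0 \<le> s y" using s by (simp add: convex_weights_def)
    then show "0 \<le> s y * (v - a y)"
      using a[OF \<open>y \<in> B\<close>] by (cases "s y = 0") simp_all
  qed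
  have "(\<Sum>y\<in>B. s y * (v - a y)) = (\<Sum>y\<in>B. s y) * v - (\<Sum>y\<in>B. s y * a y)"
    by (simp add: right_diff_distrib sum_subtractf sum_distrib_right)
  also have "\<dots> \<le> 0" using s v by (simp add: convex_weights_def)
  finally have "(\<Sum>y\<in>B. s y * (v - a y)) \<le> 0" .
  moreover have "0 \<le> (\<Sum>y\<in>B. s y * (v - a y))"
    using nonneg by (simp add: sum_nonneg)
  ultimately have "(\<Sum>y\<in>B. s y * (v - a y)) = 0" by linarith
  then have "\<forall>y\<in>B. s y * (v - a y) = 0"
    using sum_nonneg_eq_0_iff[OF \<open>finite B\<close>, of "\<lambda>y. s y * (v - a y)"] nonneg by simp
  then show ?thesis using \<open>y \<in> B\<close> \<open>0 < s y\<close> by auto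
qed

lemma convex_weights_point:
  assumes "finite A" "convex_weights A t" "x \<in> A" "t x = 1"
  shows "(\<Sum>x'\<in>A. t x' * f x') = f x"
proof -
  have "sum t (A - {x}) = 0"
    using assms sum.remove[of A x t] by (simp add: convex_weights_def)
  then have "\<forall>x'\<in>A - {x}. t x' = 0"
    using assms by (subst (asm) sum_nonneg_eq_0_iff) (auto simp: convex_weights_def)
  then show ?thesis
    using assms sum.remove[of A x "\<lambda>x'. t x' * f x'"] by simp
qed

lemma convex_self_weight_eq_1:
  assumes "finite A" "x \<in> A" and r: "convex_weights A r"
    and dom: "\<forall>k\<in>K. c x k \<le> (\<Sum>x'\<in>A. r x' * c x' k)"
    and irredundant: "\<not> convex_dominated K c (A - {x}) (c x)"
  shows "r x = 1"
proof (rule ccontr)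
  assume "r x \<noteq> 1"
  then have "r x < 1" using convex_weights_le_1[OF \<open>finite A\<close> r \<open>x \<in> A\<close>] by simp
  define t where "t x' = r x' / (1 - r x)" for x'
  have split: "(\<Sum>x'\<in>A. g x') = g x + (\<Sum>x'\<in>A - {x}. g x')" for g :: "_ \<Rightarrow> real"
    using sum.remove[OF \<open>finite A\<close> \<open>x \<in> A\<close>] by simp
  have "convex_weights (A - {x}) t"
    using r \<open>r x < 1\<close> split[of r]
    by (auto simp: convex_weights_def t_def sum_divide_distrib[symmetric])
  moreover have "c x k \<le> (\<Sum>x'\<in>A - {x}. t x' * c x' k)" if "k \<in> K" for k
  proof -
    have "c x k \<le> r x * c x k + (\<Sum>x'\<in>A - {x}. r x' * c x' k)"
      using dom that split[of "\<lambda>x'. r x' * c x' k"] by fastforce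
    then have "(1 - r x) * c x k \<le> (\<Sum>x'\<in>A - {x}. r x' * c x' k)"
      by (simp add: left_diff_distrib)
    then show ?thesis
      using \<open>r x < 1\<close> by (simp add: t_def sum_divide_distrib[symmetric] le_divide_eq mult.commute)
  qed
  ultimately show False
    using irredundant unfolding convex_dominated_def by blast
qed

lemma mutually_convex_dominated_member:
  assumes "finite A" "finite B" "x \<in> A"
    and dom_d: "\<forall>y\<in>B. convex_dominated K c A (d y)"
    and dom_c: "convex_dominated K d B (c x)"
    and irredundant: "\<not> convex_dominated K c (A - {x}) (c x)"
  shows "\<exists>y\<in>B. \<forall>k\<in>K. d y k = c x k"
proof -
  obtain s where s: "convex_weights B s" and c_le: "\<forall>k\<in>K. c x k \<le> (\<Sum>y\<in>B. s y * d y k)"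
    using dom_c unfolding convex_dominated_def by blast
  obtain T where T_dom: "\<forall>y\<in>B. convex_weights A (T y) \<and>
      (\<forall>k\<in>K. d y k \<le> (\<Sum>x'\<in>A. T y x' * c x' k))"
    using bchoice[OF dom_d[unfolded convex_dominated_def]] by blast
  then have T: "\<And>y. y \<in> B \<Longrightarrow> convex_weights A (T y)"
    and d_le: "\<And>y k. y \<in> B \<Longrightarrow> k \<in> K \<Longrightarrow> d y k \<le> (\<Sum>x'\<in>A. T y x' * c x' k)"
    by blast+
  define r where "r x' = (\<Sum>y\<in>B. s y * T y x')" for x'
  have r_sum: "(\<Sum>x'\<in>A. r x' * f x') = (\<Sum>y\<in>B. s y * (\<Sum>x'\<in>A. T y x' * f x'))" for f
    unfolding r_def by (simp add: sum_distrib_left sum_distrib_right mult_ac) (rule sum.swap)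
  have "convex_weights A r"
    unfolding r_def using convex_weights_compose[OF \<open>finite A\<close> s T] .
  moreover have "\<forall>k\<in>K. c x k \<le> (\<Sum>x'\<in>A. r x' * c x' k)"
  proof
    fix k assume "k \<in> K"
    have "c x k \<le> (\<Sum>y\<in>B. s y * d y k)" using c_le \<open>k \<in> K\<close> by blast
    also have "\<dots> \<le> (\<Sum>y\<in>B. s y * (\<Sum>x'\<in>A. T y x' * c x' k))"
      using s d_le \<open>k \<in> K\<close> by (intro sum_mono mult_left_mono) (auto simp: convex_weights_def)
    finally show "c x k \<le> (\<Sum>x'\<in>A. r x' * c x' k)" by (simp add: r_sum)
  qed
  ultimately have "r x = 1"
    using convex_self_weight_eq_1[OF \<open>finite A\<close> \<open>x \<in> A\<close> _ _ irredundant] by blast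
  \<comment> \<open>So every d y used with positive weight puts all of its own weight on c x.\<close>
  then have T_x: "T y x = 1" if "y \<in> B" "0 < s y" for y
    using convex_combination_squeeze[OF \<open>finite B\<close> s, of 1 "\<lambda>y. T y x"] that
      convex_weights_le_1[OF \<open>finite A\<close> T \<open>x \<in> A\<close>] by (simp add: r_def)
  have d_le_c: "d y k \<le> c x k" if "y \<in> B" "0 < s y" "k \<in> K" for y k
    using d_le[of y k] that convex_weights_point[OF \<open>finite A\<close> T \<open>x \<in> A\<close> T_x] by simp
  obtain y where "y \<in> B" "0 < s y"
    using convex_weights_nonzero[OF s] .
  moreover have "d y k = c x k" if "k \<in> K" for k
    using convex_combination_squeeze[OF \<open>finite B\<close> s, of "c x k" "\<lambda>y. d y k"]
      c_le d_le_c that \<open>y \<in> B\<close> \<open>0 < s y\<close> by blast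
  ultimately show ?thesis by blast
qed

definition rel_chain :: "('a \<Rightarrow> 'a \<Rightarrow> bool) \<Rightarrow> nat \<Rightarrow> (nat \<Rightarrow> 'a) \<Rightarrow> bool" where
  "rel_chain R m c \<longleftrightarrow> (\<forall>x. Suc x < m \<longrightarrow> R (c x) (c (Suc x)))"

lemma rel_chain_less:
  assumes "transp R" "rel_chain R m c"
  shows "i < j \<Longrightarrow> j < m \<Longrightarrow> R (c i) (c j)"
proof (induction j)
  case (Suc j)
  have step: "R (c j) (c (Suc j))" using \<open>rel_chain R m c\<close> Suc.prems by (simp add: rel_chain_def)
  show ?case
  proof (cases "i = j")
    case False
    then have "R (c i) (c j)" using Suc by simp
    with step show ?thesis using \<open>transp R\<close> by (blast dest: transpD)
  qed (use step in simp)
qed simp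

lemma rel_chain_inj_on:
  assumes "transp R" "irreflp R" "rel_chain R m c"
  shows "inj_on c {..<m}"
proof (rule inj_onI, rule ccontr)
  fix i j assume "i \<in> {..<m}" "j \<in> {..<m}" "c i = c j" "i \<noteq> j"
  then consider "i < j" | "j < i" by linarith
  then have "R (c i) (c j) \<or> R (c j) (c i)"
    using rel_chain_less[OF assms(1,3)] \<open>i \<in> {..<m}\<close> \<open>j \<in> {..<m}\<close> by cases auto
  then show False using \<open>irreflp R\<close> \<open>c i = c j\<close> by (simp add: irreflp_def)
qed

lemma rel_chain_card_predecessors:
  assumes "transp R" "irreflp R" "rel_chain R m c" "x < m"
  shows "card {a \<in> c ` {..<m}. R a (c x)} = x"
proof -
  have "{a \<in> c ` {..<m}. R a (c x)} = c ` {..<x}"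
  proof safe
    fix i assume "i < m" "R (c i) (c x)"
    show "c i \<in> c ` {..<x}"
    proof (cases "i < x")
      case False
      then have "i = x \<or> R (c x) (c i)"
        using rel_chain_less[OF assms(1,3), of x i] \<open>i < m\<close> by (cases "i = x") auto
      then have "R (c x) (c x)"
        using \<open>R (c i) (c x)\<close> \<open>transp R\<close> by (auto dest: transpD)
      then show ?thesis using \<open>irreflp R\<close> by (simp add: irreflp_def)
    qed simp
  next
    fix i assume "i < x"
    then show "c i \<in> c ` {..<m}" "R (c i) (c x)"
      using rel_chain_less[OF assms(1,3)] \<open>x < m\<close> by auto
  qed
  moreover have "inj_on c {..<x}"
    by (rule inj_on_subset[OF rel_chain_inj_on[OF assms(1-3)]]) (use \<open>x < m\<close> in auto)
  ultimately show ?thesis by (simp add: card_image)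
qed

lemma rel_chain_enumeration_unique:
  assumes R: "transp R" "irreflp R" and "rel_chain R m c" "rel_chain R m' d"
    and same_image: "c ` {..<m} = d ` {..<m'}"
  shows "m = m' \<and> (\<forall>x<m. c x = d x)"
proof
  show "m = m'"
    using same_image card_image[OF rel_chain_inj_on[OF R \<open>rel_chain R m c\<close>]]
      card_image[OF rel_chain_inj_on[OF R \<open>rel_chain R m' d\<close>]] by simp
  show "\<forall>x<m. c x = d x"
  proof (intro allI impI)
    fix x assume "x < m"
    then obtain y where "y < m'" "c x = d y" using same_image by force
    \<comment> \<open>Both indices count the members of the common image lying strictly above c x.\<close>
    then have "x = y"
      using rel_chain_card_predecessors[OF R \<open>rel_chain R m c\<close> \<open>x < m\<close>]
        rel_chain_card_predecessors[OF R \<open>rel_chain R m' d\<close> \<open>y < m'\<close>] same_image by simp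
    then show "c x = d x" using \<open>c x = d y\<close> by simp
  qed
qed

definition lex_greater :: "nat \<Rightarrow> (nat \<Rightarrow> real) \<Rightarrow> (nat \<Rightarrow> real) \<Rightarrow> bool" where
  "lex_greater n a b \<longleftrightarrow> (\<exists>l\<in>{1..n}. (\<forall>k\<in>{1..<l}. a k = b k) \<and> b l < a l)"

lemma transp_lex_greater: "transp (lex_greater n)"
proof (rule transpI)
  fix a b c assume "lex_greater n a b" "lex_greater n b c"
  then obtain l1 l2 where
    l1: "l1 \<in> {1..n}" "\<forall>k\<in>{1..<l1}. a k = b k" "b l1 < a l1" and
    l2: "l2 \<in> {1..n}" "\<forall>k\<in>{1..<l2}. b k = c k" "c l2 < b l2"
    unfolding lex_greater_def by blast
  show "lex_greater n a c"
    unfolding lex_greater_def using l1 l2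
    by (cases l1 l2 rule: linorder_cases) (auto intro!: bexI[of _ "min l1 l2"])
qed

lemma irreflp_lex_greater: "irreflp (lex_greater n)"
  by (auto simp: irreflp_def lex_greater_def)

lemma standard_form_antimono:
  assumes "standard_form n m N" "x < m"
  shows "antimono_on {..<n} (col N x)"
proof -
  have "\<forall>i j. i \<le> j \<and> j < n \<longrightarrow> N j x \<le> N i x"
    using assms unfolding standard_form_def by blast
  then show ?thesis by (auto simp: col_def monotone_on_def)
qed

lemma standard_form_kyfan_eq_cumsum:
  assumes "standard_form n m N" "x < m" "k \<le> n"
  shows "kyfan n (col N x) k = cumsum (col N x) k"
  using kyfan_eq_cumsum[OF standard_form_antimono[OF assms(1,2)] assms(3)] .

lemma standard_form_not_majorized:
  assumes "standard_form n m N" "x < m"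
    and "\<forall>x'<m. 0 \<le> t x'" "t x = 0" "(\<Sum>x'<m. t x') = 1"
  shows "\<not> majorizes n (\<lambda>y. \<Sum>x'<m. t x' * N y x') (col N x)"
proof -
  have "\<forall>x<m. \<not> (\<exists>t::nat \<Rightarrow> real. (\<forall>x'<m. 0 \<le> t x') \<and> t x = 0 \<and> (\<Sum>x'<m. t x') = 1 \<and>
          majorizes n (\<lambda>y. \<Sum>x'<m. t x' * N y x') (col N x))"
    using assms(1) unfolding standard_form_def by (elim conjE)
  then show ?thesis using assms(2-) by blast
qed

text \<open>Set to 0 outside {1..n}, so that equal profiles are equal functions.\<close>
definition cumsum_profile :: "nat \<Rightarrow> (nat \<Rightarrow> nat \<Rightarrow> real) \<Rightarrow> nat \<Rightarrow> nat \<Rightarrow> real" where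
  "cumsum_profile n N x k = (if k \<in> {1..n} then cumsum (col N x) k else 0)"

lemma standard_form_lex_chain:
  assumes N: "standard_form n m N"
  shows "rel_chain (lex_greater n) m (cumsum_profile n N)"
  unfolding rel_chain_def
proof (intro allI impI)
  fix x assume "Suc x < m"
  then have kyfan_eq: "kyfan n (col N x') k = cumsum (col N x') k" if "x' \<in> {x, Suc x}" "k \<le> n" for x' k
    using standard_form_kyfan_eq_cumsum[OF N] that by auto
  have "\<forall>x. x + 1 < m \<longrightarrow> (\<exists>l\<in>{1..n}. (\<forall>k\<in>{1..<l}. kyfan n (col N x) k = kyfan n (col N (x+1)) k) \<and>
          kyfan n (col N x) l > kyfan n (col N (x+1)) l)"
    using N unfolding standard_form_def by (elim conjE)
  then obtain l where "l \<in> {1..n}"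
    "\<forall>k\<in>{1..<l}. kyfan n (col N x) k = kyfan n (col N (Suc x)) k"
    "kyfan n (col N (Suc x)) l < kyfan n (col N x) l"
    using \<open>Suc x < m\<close> by auto
  with kyfan_eq show "lex_greater n (cumsum_profile n N x) (cumsum_profile n N (Suc x))"
    unfolding lex_greater_def cumsum_profile_def by (intro bexI[of _ l]) auto
qed

lemma standard_form_irredundant:
  assumes N: "standard_form n m N" and "x < m"
  shows "\<not> convex_dominated {1..n} (\<lambda>x. cumsum (col N x)) ({..<m} - {x}) (cumsum (col N x))"
proof
  assume "convex_dominated {1..n} (\<lambda>x. cumsum (col N x)) ({..<m} - {x}) (cumsum (col N x))"
  then obtain t where t: "convex_weights ({..<m} - {x}) t"
    and dom: "\<forall>k\<in>{1..n}. cumsum (col N x) k \<le> (\<Sum>x'\<in>{..<m} - {x}. t x' * cumsum (col N x') k)"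
    unfolding convex_dominated_def by blast
  define t' where "t' = t(x := 0)"
  have extend: "(\<Sum>x'<m. t' x' * f x') = (\<Sum>x'\<in>{..<m} - {x}. t x' * f x')" for f
  proof -
    have "(\<Sum>x'<m. t' x' * f x') = (\<Sum>x'\<in>{..<m} - {x}. t' x' * f x')"
      using sum.remove[of "{..<m}" x "\<lambda>x'. t' x' * f x'"] \<open>x < m\<close> by (simp add: t'_def)
    also have "\<dots> = (\<Sum>x'\<in>{..<m} - {x}. t x' * f x')"
      by (rule sum.cong) (auto simp: t'_def)
    finally show ?thesis .
  qed
  have t'_nonneg: "\<forall>x'<m. 0 \<le> t' x'"
    using t by (simp add: t'_def convex_weights_def)
  define q where "q y = (\<Sum>x'<m. t' x' * N y x')" for y
  have q_antimono: "antimono_on {..<n} q"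
    using standard_form_antimono[OF N] t'_nonneg unfolding q_def monotone_on_def col_def
    by (auto intro!: sum_mono mult_left_mono)
  have "majorizes n q (col N x)"
    unfolding majorizes_def
  proof
    fix k assume "k \<in> {1..n}"
    have "kyfan n (col N x) k = cumsum (col N x) k"
      using standard_form_kyfan_eq_cumsum[OF N \<open>x < m\<close>] \<open>k \<in> {1..n}\<close> by simp
    also have "\<dots> \<le> (\<Sum>x'<m. t' x' * cumsum (col N x') k)"
      using dom \<open>k \<in> {1..n}\<close> extend by simp
    also have "\<dots> = cumsum q k"
      unfolding q_def cumsum_sum cumsum_scale by (simp add: col_def)
    also have "\<dots> = kyfan n q k"
      using kyfan_eq_cumsum[OF q_antimono] \<open>k \<in> {1..n}\<close> by simp
    finally show "kyfan n (col N x) k \<le> kyfan n q k" .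
  qed
  moreover have "t' x = 0" "(\<Sum>x'<m. t' x') = 1"
    using t extend[of "\<lambda>_. 1"] by (simp_all add: t'_def convex_weights_def)
  ultimately show False
    using standard_form_not_majorized[OF N \<open>x < m\<close> t'_nonneg] unfolding q_def by blast
qed

lemma channel_majorizes_convex_dominated:
  assumes N: "standard_form n m N" and "channel_majorizes n m N m' M" and "x' < m'"
  shows "convex_dominated {1..n} (\<lambda>x. cumsum (col N x)) {..<m} (cumsum (col M x'))"
proof -
  obtain l :: nat and S D :: "nat \<Rightarrow> nat \<Rightarrow> nat \<Rightarrow> real" where
    S_nonneg: "\<forall>x<m. \<forall>z<l. \<forall>x'<m'. 0 \<le> S x z x'" and
    S_sum: "\<forall>x'<m'. (\<Sum>x<m. \<Sum>z<l. S x z x') = 1" and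
    D_nonneg: "\<forall>z<l. \<forall>y'<n. \<forall>y<n. 0 \<le> D y' y z" and
    D_col: "\<forall>z<l. \<forall>y<n. (\<Sum>y'<n. D y' y z) = 1" and
    D_row: "\<forall>z<l. \<forall>y'<n. (\<Sum>y<n. D y' y z) = 1" and
    M: "\<forall>y<n. \<forall>x'<m'. M y x' = (\<Sum>z<l. \<Sum>x<m. \<Sum>y0<n. D y y0 z * N y0 x * S x z x')"
    using assms(2) unfolding channel_majorizes_def by (elim exE conjE) (rule that)
  have D: "doubly_stochastic n (\<lambda>y y0. D y y0 z)" if "z < l" for z
    using D_nonneg D_col D_row that by (simp add: doubly_stochastic_def)
  define t where "t x = (\<Sum>z<l. S x z x')" for x
  have "convex_weights {..<m} t"
    using S_nonneg S_sum \<open>x' < m'\<close> by (auto simp: convex_weights_def t_def intro: sum_nonneg)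
  moreover have "cumsum (col M x') k \<le> (\<Sum>x<m. t x * cumsum (col N x) k)" if "k \<in> {1..n}" for k
  proof -
    have "cumsum (col M x') k =
        cumsum (\<lambda>y. \<Sum>z<l. \<Sum>x<m. S x z x' * (\<Sum>y0<n. D y y0 z * N y0 x)) k"
      using M \<open>x' < m'\<close> that unfolding cumsum_def col_def
      by (intro sum.cong refl) (simp add: sum_distrib_left mult_ac)
    also have "\<dots> = (\<Sum>z<l. \<Sum>x<m. S x z x' * cumsum (\<lambda>y. \<Sum>y0<n. D y y0 z * N y0 x) k)"
      by (simp add: cumsum_sum cumsum_scale)
    also have "\<dots> \<le> (\<Sum>z<l. \<Sum>x<m. S x z x' * cumsum (col N x) k)"
    proof (intro sum_mono mult_left_mono)
      fix z x assume "z \<in> {..<l}" "x \<in> {..<m}"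
      then show "0 \<le> S x z x'" using S_nonneg \<open>x' < m'\<close> by simp
      show "cumsum (\<lambda>y. \<Sum>y0<n. D y y0 z * N y0 x) k \<le> cumsum (col N x) k"
        using cumsum_doubly_stochastic_le[OF D standard_form_antimono[OF N]] \<open>z \<in> {..<l}\<close>
          \<open>x \<in> {..<m}\<close> that by (simp add: col_def)
    qed
    also have "\<dots> = (\<Sum>x<m. t x * cumsum (col N x) k)"
      unfolding t_def by (subst sum.swap) (simp add: sum_distrib_right)
    finally show ?thesis .
  qed
  ultimately show ?thesis
    unfolding convex_dominated_def by blast
qed

lemma channel_majorizes_eq:
  assumes "\<forall>y<n. \<forall>x<m. M y x = N y x"
  shows "channel_majorizes n m N m M"
  unfolding channel_majorizes_def
proof (intro exI conjI)
  let ?S = "\<lambda>x (z::nat) x'. of_bool (x = x') :: real"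
  let ?D = "\<lambda>y y0 (z::nat). of_bool (y = y0) :: real"
  show "\<forall>y<n. \<forall>x'<m. M y x' = (\<Sum>z<1. \<Sum>x<m. \<Sum>y0<n. ?D y y0 z * N y0 x * ?S x z x')"
  proof (intro allI impI)
    fix y x' assume "y < n" "x' < m"
    have "(\<Sum>x<m. \<Sum>y0<n. ?D y y0 0 * N y0 x * ?S x 0 x') = (\<Sum>x<m. N y x * of_bool (x = x'))"
      using \<open>y < n\<close> by (simp add: sum_distrib_right[symmetric])
    also have "\<dots> = N y x'"
      using \<open>x' < m\<close> by (subst sum_mult_of_bool_eq) auto
    finally show "M y x' = (\<Sum>z<1. \<Sum>x<m. \<Sum>y0<n. ?D y y0 z * N y0 x * ?S x z x')"
      using assms \<open>y < n\<close> \<open>x' < m\<close> by simp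
  qed
qed auto

lemma cumsum_profile_eq_imp_eq:
  assumes "cumsum_profile n N x = cumsum_profile n M x'" "y < n"
  shows "N y x = M y x'"
proof -
  have "cumsum (col N x) k = cumsum (col M x') k" if "k \<le> n" for k
  proof (cases "k = 0")
    case False
    then show ?thesis
      using fun_cong[OF assms(1), of k] that by (simp add: cumsum_profile_def)
  qed (simp add: cumsum_def)
  from this[of y] this[of "Suc y"] \<open>y < n\<close> show ?thesis
    by (simp add: cumsum_def col_def)
qed

lemma mutual_majorization_profiles_subset:
  assumes N: "standard_form n m N" and M: "standard_form n m' M"
    and NM: "channel_majorizes n m N m' M" and MN: "channel_majorizes n m' M m N"
  shows "cumsum_profile n N ` {..<m} \<subseteq> cumsum_profile n M ` {..<m'}"
proof
  fix p assume "p \<in> cumsum_profile n N ` {..<m}"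
  then obtain x where "x < m" and p: "p = cumsum_profile n N x" by blast
  then obtain y where "y < m'" and "\<forall>k\<in>{1..n}. cumsum (col M y) k = cumsum (col N x) k"
    using mutually_convex_dominated_member[of "{..<m}" "{..<m'}" x "{1..n}"
        "\<lambda>x. cumsum (col N x)" "\<lambda>y. cumsum (col M y)"]
      channel_majorizes_convex_dominated[OF N NM] channel_majorizes_convex_dominated[OF M MN]
      standard_form_irredundant[OF N] by auto
  then have "p = cumsum_profile n M y"
    unfolding p cumsum_profile_def by auto
  with \<open>y < m'\<close> show "p \<in> cumsum_profile n M ` {..<m'}" by blast
qed

theorem theorem6:
  fixes n m m' :: nat and N M :: "nat \<Rightarrow> nat \<Rightarrow> real"
  assumes "standard_form n m N" and "standard_form n m' M"
  shows "channel_equiv n m N m' M \<longleftrightarrow> (m = m' \<and> (\<forall>y<n. \<forall>x<m. N y x = M y x))"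
proof
  assume "channel_equiv n m N m' M"
  then have "cumsum_profile n N ` {..<m} = cumsum_profile n M ` {..<m'}"
    using mutual_majorization_profiles_subset[OF assms] mutual_majorization_profiles_subset[OF assms(2,1)]
    unfolding channel_equiv_def by blast
  then have "m = m' \<and> (\<forall>x<m. cumsum_profile n N x = cumsum_profile n M x)"
    using rel_chain_enumeration_unique[OF transp_lex_greater irreflp_lex_greater
        standard_form_lex_chain[OF assms(1)] standard_form_lex_chain[OF assms(2)]] by blast
  then show "m = m' \<and> (\<forall>y<n. \<forall>x<m. N y x = M y x)"
    using cumsum_profile_eq_imp_eq by blast
next
  assume "m = m' \<and> (\<forall>y<n. \<forall>x<m. N y x = M y x)"
  then show "channel_equiv n m N m' M"
    using channel_majorizes_eq[of n m M N] channel_majorizes_eq[of n m N M]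
    unfolding channel_equiv_def by auto
qed

end
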